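(* Let $a>0$, $\mu=p/q\in(0,1)$ with $p,q$ coprime, and consider $u_t+au_x=0$ on the periodic domain $[0,1)$ with 1-periodic initial function $u_0\in C^0([0,1])$. For each $m\in\mathbb{N}$ with $N=\frac{1}{\mu h}\in\mathbb{N}$, $h=1/m$, choose $\delta=\delta(h)$ with $0<\delta<h/q$, and initialize the nonlinear jet scheme by $$\phi_j^0=\hat\phi_j+\frac{\hat\phi_{j+1}-\hat\phi_j}{h}\,\delta,\qquad \psi_j^0=\frac{\hat\phi_{j+1}-\hat\phi_j}{h},\qquad \hat\phi_j=u_0(x_j),$$ (indices mod $m$), i.e. $\phi_j^0=I(x_j+\delta)$, $\psi_j^0=I'(x_j+\delta)$ where $I$ is the continuous periodic piecewise linear interpolant of the data $(x_j,\hat\phi_j)$. Let $\boldsymbol U^{h,t_n}$ be the state after $n$ jet scheme steps ($t_n=n\Delta t$, $\Delta t=\mu h/a$), and let $\varepsilon^{h,t_n}=\|\mathcal{I}(\boldsymbol U^{h,t_n})-u(\cdot,t_n)\|_{L^1([0,1])}$, where $u(x,t_n)=u_0(x-at_n \bmod 1)$. Then $\mathcal{I}(\boldsymbol U^{h,0})(x)=I(x+\delta)$, for all $n$ one has $\mathcal{I}(\boldsymbol U^{h,t_n})(x)=\mathcal{I}(\boldsymbol U^{h,0})(x-n\mu h\bmod 1)$, and $$\sup_{n\ge0}\varepsilon^{h,t_n}\le \omega(u_0,h)+\omega(u_0,\delta).$$ Consequently the scheme has the commuting limits property $$\lim_{h\to0}\limsup_{n\to\infty}\varepsilon^{h,t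_n}=0=\limsup_{n\to\infty}\lim_{h\to0}\varepsilon^{h,t_n}.$$
   Context: Grid $x_j=jh$, $j=1,\dots,m$, on the periodic domain. State vector $\boldsymbol U=(\phi_1,\psi_1,\dots,\phi_m,\psi_m)\in\mathbb{R}^{2m}$. Nonlinear jet scheme interpolant $\mathcal{I}(\boldsymbol U)$: on each cell $[x_j,x_{j+1}]$ let $L_L(x)=\phi_j+\psi_j(x-x_j)$, $L_R(x)=\phi_{j+1}+\psi_{j+1}(x-x_{j+1})$; if $\psi_j\ne\psi_{j+1}$ and their intersection point $x_k$ lies in $(x_j,x_{j+1})$, set $\mathcal{I}(\boldsymbol U)=L_L$ on $[x_j,x_k]$ and $=L_R$ on $(x_k,x_{j+1}]$; otherwise use the linear interpolant $\phi_j+\frac{\phi_{j+1}-\phi_j}{h}(x-x_j)$ on the cell. One jet scheme step: $\boldsymbol U\mapsto\mathcal{E}(\mathcal{A}\,\mathcal{I}(\boldsymbol U))$, where $\mathcal{A}f(x)=f(x-\mu h)$ is the periodic shift by $a\Delta t$ and $\mathcal{E}f=(f(x_1),f'(x_1),\dots,f(x_m),f'(x_m))$ with left-sided derivatives taken at kinks; equivalently, $\phi_j^{n+1}=P(x_j-\mu h)$, $\psi_j^{n+1}=P'(x_j-\mu h)$ with $P=\mathcal{I}(\boldsymbol U^{h,t_n})$. The modulus of continuity is $\omega(u_0,r)=\sup\{|u_0(x)-u_0(y)|:x,y\in[0,1],\ |x-y|<r\}$. The commuting-limits identity is understood with $h=1/m$ ranging over those $m$ for which $N\in\mathbb{N}$,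 and exact arithmetic is assumed. *)

theory Defs
  imports "HOL-Analysis.Analysis"
begin

text \<open>A state vector U = (phi_j, psi_j)_j is represented as a function on nat;
  only the residues j mod m are used (periodic indexing). Grid points x_j = j h,
  h = 1/m, with x_0 = 0 identified with x_m = 1.\<close>

type_synonym jet_state = "nat \<Rightarrow> real \<times> real"

definition jet_interp :: "nat \<Rightarrow> jet_state \<Rightarrow> real \<Rightarrow> real" where
  "jet_interp m U x =
    (let h = 1 / real m; y = frac x; j = nat \<lfloor>y * real m\<rfloor>;
         xj = real j * h; xj1 = real (j + 1) * h;
         phiL = fst (U (j mod m)); psiL = snd (U (j mod m));
         phiR = fst (U ((j + 1) mod m)); psiR = snd (U ((j + 1) mod m));
         xk = (phiR - phiL + psiL * xj - psiR * xj1) / (psiL - psiR)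
     in if psiL \<noteq> psiR \<and> xj < xk \<and> xk < xj1
        then (if y \<le> xk then phiL + psiL * (y - xj) else phiR + psiR * (y - xj1))
        else phiL + (phiR - phiL) / h * (y - xj))"

definition left_deriv :: "(real \<Rightarrow> real) \<Rightarrow> real \<Rightarrow> real" where
  "left_deriv f x = (THE D. (f has_real_derivative D) (at_left x))"

definition jet_step :: "nat \<Rightarrow> real \<Rightarrow> jet_state \<Rightarrow> jet_state" where
  "jet_step m \<mu> U = (\<lambda>j. let P = jet_interp m U; z = real j / real m - \<mu> * (1 / real m)
                          in (P z, left_deriv P z))"

definition jet_iter :: "nat \<Rightarrow> real \<Rightarrow> jet_state \<Rightarrow> nat \<Rightarrow> jet_state" where
  "jet_iter m \<mu> U n = (jet_step m \<mu> ^^ n) U"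

definition phat :: "nat \<Rightarrow> (real \<Rightarrow> real) \<Rightarrow> nat \<Rightarrow> real" where
  "phat m u0 j = u0 (real (j mod m) / real m)"

definition jet_init :: "nat \<Rightarrow> (real \<Rightarrow> real) \<Rightarrow> real \<Rightarrow> jet_state" where
  "jet_init m u0 \<delta> = (\<lambda>j.
     (phat m u0 j + (phat m u0 (j + 1) - phat m u0 j) / (1 / real m) * \<delta>,
      (phat m u0 (j + 1) - phat m u0 j) / (1 / real m)))"

definition lin_interp :: "nat \<Rightarrow> (real \<Rightarrow> real) \<Rightarrow> real \<Rightarrow> real" where
  "lin_interp m u0 x =
    (let h = 1 / real m; y = frac x; j = nat \<lfloor>y * real m\<rfloor>
     in phat m u0 j + (phat m u0 (j + 1) - phat m u0 j) / h * (y - real j * h))"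

definition modulus :: "(real \<Rightarrow> real) \<Rightarrow> real \<Rightarrow> real" where
  "modulus u0 r = Sup {\<bar>u0 x - u0 y\<bar> | x y. x \<in> {0..1} \<and> y \<in> {0..1} \<and> \<bar>x - y\<bar> < r}"

text \<open>Pointwise error |I(U^{h,t_n})(x) - u(x,t_n)|, with t_n = n dt, dt = mu h / a,
  u(x,t) = u0(x - a t mod 1).\<close>
definition jet_err_fun :: "real \<Rightarrow> nat \<Rightarrow> real \<Rightarrow> (real \<Rightarrow> real) \<Rightarrow> real \<Rightarrow> nat \<Rightarrow> real \<Rightarrow> real" where
  "jet_err_fun a m \<mu> u0 \<delta> n x =
     \<bar>jet_interp m (jet_iter m \<mu> (jet_init m u0 \<delta>) n) x
        - u0 (frac (x - a * (real n * (\<mu> * (1 / real m) / a))))\<bar>"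

definition jet_error :: "real \<Rightarrow> nat \<Rightarrow> real \<Rightarrow> (real \<Rightarrow> real) \<Rightarrow> real \<Rightarrow> nat \<Rightarrow> real" where
  "jet_error a m \<mu> u0 \<delta> n = integral {0..1} (jet_err_fun a m \<mu> u0 \<delta> n)"

end

theory Submission
  imports Defs
begin

text \<open>Started from the jet of the piecewise linear interpolant I shifted by \<delta>, the state stays
  the jet of a translate I(. + c) of I: on each cell the two tangent lines of the jet interpolant
  meet exactly at the kink of I(. + c), so the interpolant reproduces I(. + c), and resampling
  its shift by \<mu> h gives the jet of I(. + c - \<mu> h). Hence the scheme transports I(. + \<delta>)
  exactly, and at every time the error equals the distance between I(. + \<delta>) and u0, which is
  at most \<omega>(u0,h) + \<omega>(u0,\<delta>) since I is a convex combination of neighbouring nodal values.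
  As this bound is uniform in n and tends to 0 with h, both iterated limits vanish.\<close>

lemma periodic_add_of_int:
  assumes per: "\<forall>x. u (x + 1) = u (x::real)"
  shows "u (x + of_int n) = u x"
proof -
  have nat_shift: "u (y + real k) = u y" for y k
  proof (induction k)
    case (Suc k)
    then show ?case using per[rule_format, of "y + real k"] by (simp add: ac_simps)
  qed simp
  show ?thesis
  proof (cases "n \<ge> 0")
    case True
    then show ?thesis using nat_shift[of x "nat n"] by simp
  next
    case False
    then show ?thesis using nat_shift[of "x + of_int n" "nat (- n)"] by simp
  qed
qed

lemma periodic_frac:
  assumes per: "\<forall>x. u (x + 1) = u (x::real)"
  shows "u (frac x) = u x"
  using periodic_add_of_int[OF per, of "frac x" "\<lfloor>x\<rfloor>"] by (simp add: frac_def)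

definition grid_val :: "nat \<Rightarrow> (real \<Rightarrow> real) \<Rightarrow> int \<Rightarrow> real" where
  "grid_val m u k = u (of_int k / real m)"

definition grid_slope :: "nat \<Rightarrow> (real \<Rightarrow> real) \<Rightarrow> int \<Rightarrow> real" where
  "grid_slope m u k = (grid_val m u (k + 1) - grid_val m u k) * real m"

lemma grid_val_add_mult:
  assumes per: "\<forall>x. u (x + 1) = u (x::real)" and m: "m > 0"
  shows "grid_val m u (k + int m * n) = grid_val m u k"
proof -
  have "of_int (k + int m * n) / real m = of_int k / real m + of_int n"
    using m by (simp add: field_simps)
  then show ?thesis unfolding grid_val_def using periodic_add_of_int[OF per] by simp
qed

lemma grid_slope_add_mult:
  assumes per: "\<forall>x. u (x + 1) = u (x::real)" and m: "m > 0"
  shows "grid_slope m u (k + int m * n) = grid_slope m u k"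
  using grid_val_add_mult[OF per m, of k] grid_val_add_mult[OF per m, of "k + 1"]
  unfolding grid_slope_def by (simp add: algebra_simps)

lemma phat_eq_grid_val:
  assumes per: "\<forall>x. u (x + 1) = u (x::real)" and m: "m > 0"
  shows "phat m u j = grid_val m u (int j)"
  using grid_val_add_mult[OF per m, of "int (j mod m)" "int (j div m)"]
  unfolding phat_def grid_val_def
  by (simp flip: of_nat_mult of_nat_add)

lemma lin_interp_floor:
  fixes t :: real
  assumes per: "\<forall>x. u (x + 1) = u (x::real)" and m: "m > 0"
  defines "k \<equiv> \<lfloor>t * real m\<rfloor>"
  shows "lin_interp m u t = grid_val m u k + grid_slope m u k * (t - of_int k / real m)"
proof -
  have floor_frac: "\<lfloor>frac t * real m\<rfloor> = k - \<lfloor>t\<rfloor> * int m"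
  proof -
    have "frac t * real m = t * real m - of_int (\<lfloor>t\<rfloor> * int m)"
      by (simp add: frac_def algebra_simps)
    then show ?thesis unfolding k_def by (metis floor_diff_of_int)
  qed
  define j where "j = nat \<lfloor>frac t * real m\<rfloor>"
  have j: "int j = k + int m * (- \<lfloor>t\<rfloor>)"
  proof -
    have "0 \<le> \<lfloor>frac t * real m\<rfloor>" by (simp add: frac_ge_0)
    then show ?thesis unfolding j_def floor_frac by (simp add: algebra_simps)
  qed
  have "phat m u j = grid_val m u k" "phat m u (j + 1) = grid_val m u (k + 1)"
    using grid_val_add_mult[OF per m, of k "- \<lfloor>t\<rfloor>"] grid_val_add_mult[OF per m, of "k + 1" "- \<lfloor>t\<rfloor>"]
    by (simp_all add: phat_eq_grid_val[OF per m] j algebra_simps)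
  moreover have "frac t - real j * (1 / real m) = t - of_int k / real m"
    using m arg_cong[OF j, of real_of_int] by (simp add: frac_def field_simps)
  ultimately show ?thesis
    unfolding lin_interp_def Let_def j_def[symmetric] by (simp add: grid_slope_def)
qed

lemma lin_interp_on_cell:
  assumes per: "\<forall>x. u (x + 1) = u (x::real)" and m: "m > 0"
    and cell: "of_int k \<le> t * real m" "t * real m \<le> of_int k + 1"
  shows "lin_interp m u t = grid_val m u k + grid_slope m u k * (t - of_int k / real m)"
proof (cases "t * real m = of_int k + 1")
  case True
  then have "\<lfloor>t * real m\<rfloor> = k + 1" "t = (of_int k + 1) / real m"
    using m by (simp_all add: field_simps)
  then show ?thesis using lin_interp_floor[OF per m, of t] m by (simp add: grid_slope_def field_simps)
next
  case False
  then have "\<lfloor>t * real m\<rfloor> = k" using cell by (simp add: floor_eq_iff)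
  then show ?thesis using lin_interp_floor[OF per m, of t] by simp
qed

lemma lin_interp_add_of_int: "lin_interp m u (t + of_int n) = lin_interp m u t"
  unfolding lin_interp_def Let_def by simp

lemma lin_interp_frac_add: "lin_interp m u (frac t + d) = lin_interp m u (t + d)"
  using lin_interp_add_of_int[of m u "t + d" "- \<lfloor>t\<rfloor>"] by (simp add: frac_def algebra_simps)

lemma left_deriv_shifted_lin_interp:
  assumes per: "\<forall>x. u (x + 1) = u (x::real)" and m: "m > 0"
  shows "left_deriv (\<lambda>x. lin_interp m u (x + c)) z = grid_slope m u (\<lceil>(z + c) * real m\<rceil> - 1)"
proof -
  define k where "k = \<lceil>(z + c) * real m\<rceil> - 1"
  have k: "of_int k < (z + c) * real m" "(z + c) * real m \<le> of_int k + 1"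
    unfolding k_def by linarith+
  define G where "G = (\<lambda>x. grid_val m u k + grid_slope m u k * (x + c - of_int k / real m))"
  have "(G has_real_derivative grid_slope m u k) (at_left z)"
    unfolding G_def by (auto intro!: derivative_eq_intros)
  moreover have ev: "eventually (\<lambda>x. G x = lin_interp m u (x + c)) (at_left z)"
  proof -
    have "of_int k / real m - c < z" using k m by (simp add: field_simps)
    from eventually_at_left_real[OF this] show ?thesis
    proof (rule eventually_mono)
      fix x assume x: "x \<in> {of_int k / real m - c<..<z}"
      then have "of_int k \<le> (x + c) * real m" "(x + c) * real m \<le> (z + c) * real m"
        using m by (simp_all add: field_simps)
      then show "G x = lin_interp m u (x + c)"
        using lin_interp_on_cell[OF per m] k unfolding G_def by simp
    qed
  qed
  moreover have "G z = lin_interp m u (z + c)"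
    using lin_interp_on_cell[OF per m, of k "z + c"] k unfolding G_def by simp
  ultimately have deriv: "((\<lambda>x. lin_interp m u (x + c)) has_real_derivative grid_slope m u k) (at_left z)"
    using has_field_derivative_cong_eventually[OF ev] by simp
  show ?thesis unfolding left_deriv_def k_def[symmetric]
  proof (rule the_equality)
    fix D assume "((\<lambda>x. lin_interp m u (x + c)) has_real_derivative D) (at_left z)"
    then show "D = grid_slope m u k" using has_field_derivative_unique[OF _ deriv] by simp
  qed (fact deriv)
qed

text \<open>k/m is the last node strictly before t, and r \<in> (0,1] is the distance from it to t in
  grid units, so moving at most one cell to the right crosses at most the node (k+1)/m.\<close>
lemma lin_interp_two_cells:
  fixes t s :: real
  assumes per: "\<forall>x. u (x + 1) = u (x::real)" and m: "m > 0" and s: "0 \<le> s" "s \<le> 1"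
  defines "k \<equiv> \<lceil>t * real m\<rceil> - 1"
  defines "r \<equiv> t * real m - of_int k"
  shows "lin_interp m u (t + s / real m) =
    (if r + s \<le> 1 then grid_val m u k + grid_slope m u k * ((r + s) / real m)
     else grid_val m u k + grid_slope m u k / real m + grid_slope m u (k + 1) * ((r + s - 1) / real m))"
proof -
  have r: "0 < r" "r \<le> 1" unfolding r_def k_def by linarith+
  have pos: "(t + s / real m) * real m = of_int k + r + s" using m by (simp add: r_def field_simps)
  have offset: "t + s / real m - of_int k / real m = (r + s) / real m"
    using m by (simp add: r_def field_simps)
  show ?thesis
  proof (cases "r + s \<le> 1")
    case True
    then have "lin_interp m u (t + s / real m)
        = grid_val m u k + grid_slope m u k * (t + s / real m - of_int k / real m)"
      using r s by (intro lin_interp_on_cell[OF per m]) (simp_all add: pos)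
    then show ?thesis using True by (simp add: offset)
  next
    case False
    then have "lin_interp m u (t + s / real m)
        = grid_val m u (k + 1) + grid_slope m u (k + 1) * (t + s / real m - of_int (k + 1) / real m)"
      using r s by (intro lin_interp_on_cell[OF per m]) (simp_all add: pos)
    moreover have "t + s / real m - of_int (k + 1) / real m = (r + s - 1) / real m"
      using offset by (simp add: add_divide_distrib diff_divide_distrib)
    moreover have "grid_val m u (k + 1) = grid_val m u k + grid_slope m u k / real m"
      using m by (simp add: grid_slope_def)
    ultimately show ?thesis using False by simp
  qed
qed

text \<open>On one cell of length h, the jet interpolant of data taken from a continuous
  piecewise linear function with a single kink at xj + (1 - r) h returns that function:
  the intersection point of the two tangent lines is exactly the kink.\<close>
lemma jet_cell_interp_kink:
  fixes h xj xj1 y r s A sL sR phiL phiR :: real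
  assumes h: "h > 0" and xj1: "xj1 = xj + h" and y: "y = xj + s * h" "0 \<le> s" "s < 1"
    and r: "0 < r" "r \<le> 1"
    and phiL: "phiL = A + sL * (r * h)" and phiR: "phiR = A + sL * h + sR * (r * h)"
  defines "xk \<equiv> (phiR - phiL + sL * xj - sR * xj1) / (sL - sR)"
  shows "(if sL \<noteq> sR \<and> xj < xk \<and> xk < xj1
          then (if y \<le> xk then phiL + sL * (y - xj) else phiR + sR * (y - xj1))
          else phiL + (phiR - phiL) / h * (y - xj))
       = (if r + s \<le> 1 then A + sL * ((r + s) * h) else A + sL * h + sR * ((r + s - 1) * h))"
proof (cases "sL = sR")
  case True
  then show ?thesis using h unfolding phiL phiR y xj1 by (simp add: field_simps)
next
  case False
  have xk: "xk = xj + h - r * h"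
    unfolding xk_def using False by (simp add: phiL phiR xj1 field_simps)
  show ?thesis
  proof (cases "r = 1")
    case True
    have "phiL + (phiR - phiL) / h * (y - xj) = A + sL * h + sR * (s * h)"
      using h by (simp add: True phiL phiR y field_simps)
    moreover have "r + s \<le> 1 \<longleftrightarrow> s = 0" using True y by auto
    ultimately show ?thesis using True xk by auto
  next
    case False
    have "xk - xj = (1 - r) * h" "xj1 - xk = r * h" "y - xj = s * h"
      using xk xj1 y by (simp_all add: algebra_simps)
    moreover have "s * h \<le> (1 - r) * h \<longleftrightarrow> r + s \<le> 1" using h by auto
    moreover have "0 < (1 - r) * h" "0 < r * h" using h r False by simp_all
    ultimately have "xj < xk" "xk < xj1" "y \<le> xk \<longleftrightarrow> r + s \<le> 1" by linarith+
    then show ?thesis using \<open>sL \<noteq> sR\<close> by (simp add: phiL phiR y xj1 algebra_simps)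
  qed
qed

text \<open>The state is the jet (value and left derivative) of lin_interp shifted by c, sampled at the
  nodes; this is the invariant of the scheme.\<close>
definition samples_lin_interp :: "nat \<Rightarrow> (real \<Rightarrow> real) \<Rightarrow> real \<Rightarrow> jet_state \<Rightarrow> bool" where
  "samples_lin_interp m u c U \<longleftrightarrow>
     (\<forall>j. U j = (lin_interp m u (real j / real m + c),
                 grid_slope m u (\<lceil>(real j / real m + c) * real m\<rceil> - 1)))"

lemma samples_lin_interp_mod:
  assumes per: "\<forall>x. u (x + 1) = u (x::real)" and m: "m > 0" and U: "samples_lin_interp m u c U"
  shows "U (j mod m) = (lin_interp m u (real j / real m + c),
                        grid_slope m u (\<lceil>(real j / real m + c) * real m\<rceil> - 1))"
proof -
  have "real j / real m + c = (real (j mod m) / real m + c) + of_int (int (j div m))"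
    using m by (simp add: field_simps flip: of_nat_mult of_nat_add)
  moreover have "\<lceil>(x + of_int n) * real m\<rceil> - 1 = (\<lceil>x * real m\<rceil> - 1) + int m * n" for x n
    using ceiling_add_of_int[of "x * real m" "int m * n"] by (simp add: algebra_simps)
  ultimately show ?thesis
    using U unfolding samples_lin_interp_def
    by (simp only: lin_interp_add_of_int grid_slope_add_mult[OF per m])
qed

lemma jet_interp_samples:
  assumes per: "\<forall>x. u (x + 1) = u (x::real)" and m: "m > 0" and U: "samples_lin_interp m u c U"
  shows "jet_interp m U x = lin_interp m u (x + c)"
proof -
  define h where "h = 1 / real m"
  define y where "y = frac x"
  define j where "j = nat \<lfloor>y * real m\<rfloor>"
  have "real j = of_int \<lfloor>y * real m\<rfloor>"
    unfolding j_def y_def by (simp add: frac_ge_0)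
  then have j: "real j \<le> y * real m" "y * real m < real j + 1" by linarith+
  define s where "s = y * real m - real j"
  have s: "0 \<le> s" "s < 1" "y = real j * h + s * h" "y + c = (real j / real m + c) + s / real m"
    using j m unfolding s_def h_def by (simp_all add: field_simps)
  define t where "t = real j / real m + c"
  define k where "k = \<lceil>t * real m\<rceil> - 1"
  define r where "r = t * real m - of_int k"
  have r: "0 < r" "r \<le> 1" unfolding r_def k_def by linarith+
  define A where "A = grid_val m u k"
  define sL where "sL = grid_slope m u k"
  define sR where "sR = grid_slope m u (k + 1)"
  have UL: "U (j mod m) = (A + sL * (r * h), sL)"
    using samples_lin_interp_mod[OF per m U, of j] lin_interp_two_cells[OF per m, of 0 t] r
    unfolding A_def sL_def h_def t_def[symmetric] k_def[symmetric] r_def[symmetric] by simp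
  have UR: "U ((j + 1) mod m) = (A + sL * h + sR * (r * h), sR)"
  proof -
    have "real (j + 1) / real m + c = t + 1 / real m" unfolding t_def by (simp add: add_divide_distrib)
    moreover have "\<lceil>(t + 1 / real m) * real m\<rceil> - 1 = k + 1"
      using m ceiling_add_of_int[of "t * real m" 1] unfolding k_def by (simp add: algebra_simps)
    ultimately show ?thesis
      using samples_lin_interp_mod[OF per m U, of "j + 1"] lin_interp_two_cells[OF per m, of 1 t] r
      unfolding A_def sL_def sR_def h_def k_def[symmetric] r_def[symmetric] by (simp add: ac_simps)
  qed
  have "jet_interp m U x = (if r + s \<le> 1 then A + sL * ((r + s) * h) else A + sL * h + sR * ((r + s - 1) * h))"
    unfolding jet_interp_def Let_def y_def[symmetric] j_def[symmetric] h_def[symmetric] UL UR fst_conv snd_conv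
    by (rule jet_cell_interp_kink) (use m s r in \<open>simp_all add: h_def algebra_simps add_divide_distrib\<close>)
  also have "\<dots> = lin_interp m u (y + c)"
    using lin_interp_two_cells[OF per m, of s t] s
    unfolding s(4) t_def[symmetric] A_def sL_def sR_def h_def k_def[symmetric] r_def[symmetric] by simp
  also have "\<dots> = lin_interp m u (x + c)"
    unfolding y_def lin_interp_frac_add ..
  finally show ?thesis .
qed

lemma jet_init_samples:
  assumes per: "\<forall>x. u (x + 1) = u (x::real)" and m: "m > 0" and d: "0 < d" "d < 1 / real m"
  shows "samples_lin_interp m u d (jet_init m u d)"
  unfolding samples_lin_interp_def
proof
  fix j
  have dm: "0 < d * real m" "d * real m < 1" using d m by (simp_all add: field_simps)
  have pos: "(real j / real m + d) * real m = real j + d * real m" using m by (simp add: field_simps)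
  then have "\<lceil>(real j / real m + d) * real m\<rceil> = int j + 1"
    using dm by (simp add: ceiling_eq_iff)
  moreover have "lin_interp m u (real j / real m + d) = grid_val m u (int j) + grid_slope m u (int j) * d"
    using lin_interp_on_cell[OF per m, of "int j" "real j / real m + d"] dm by (simp add: pos)
  ultimately show "jet_init m u d j = (lin_interp m u (real j / real m + d),
      grid_slope m u (\<lceil>(real j / real m + d) * real m\<rceil> - 1))"
    unfolding jet_init_def phat_eq_grid_val[OF per m] by (simp add: grid_slope_def add.commute)
qed

lemma jet_step_samples:
  assumes per: "\<forall>x. u (x + 1) = u (x::real)" and m: "m > 0" and U: "samples_lin_interp m u c U"
  shows "samples_lin_interp m u (c - \<mu> / real m) (jet_step m \<mu> U)"
proof -
  have "real j / real m - \<mu> * (1 / real m) + c = real j / real m + (c - \<mu> / real m)" for j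
    by simp
  then show ?thesis
    unfolding samples_lin_interp_def jet_step_def Let_def jet_interp_samples[OF per m U, abs_def]
    by (simp only: left_deriv_shifted_lin_interp[OF per m]) simp
qed

lemma jet_iter_samples:
  assumes per: "\<forall>x. u (x + 1) = u (x::real)" and m: "m > 0" and U: "samples_lin_interp m u c U"
  shows "samples_lin_interp m u (c - real n * \<mu> / real m) (jet_iter m \<mu> U n)"
proof (induction n)
  case 0
  then show ?case using U by (simp add: jet_iter_def)
next
  case (Suc n)
  have shift: "c - real (Suc n) * \<mu> / real m = c - real n * \<mu> / real m - \<mu> / real m"
    by (simp add: algebra_simps add_divide_distrib)
  have "jet_iter m \<mu> U (Suc n) = jet_step m \<mu> (jet_iter m \<mu> U n)"
    by (simp add: jet_iter_def)
  then show ?case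
    unfolding shift by (simp only: jet_step_samples[OF per m Suc])
qed

lemma isCont_of_continuous_on_cells:
  fixes f :: "real \<Rightarrow> real" and g :: "int \<Rightarrow> real"
  assumes incr: "\<And>k. g k < g (k + 1)" and cont: "\<And>k. continuous_on {g k..g (k + 1)} f"
    and t: "g k \<le> t" "t < g (k + 1)"
  shows "isCont f t"
proof -
  have "{g (k - 1)..g k} \<union> {g k..g (k + 1)} = {g (k - 1)..g (k + 1)}"
    using incr[of "k - 1"] incr[of k] by auto
  moreover have "continuous_on ({g (k - 1)..g k} \<union> {g k..g (k + 1)}) f"
    using cont[of "k - 1"] cont[of k] by (intro continuous_on_closed_Un) auto
  moreover have "t \<in> interior {g (k - 1)..g (k + 1)}" using incr[of "k - 1"] t by simp
  ultimately show ?thesis using continuous_on_interior by metis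
qed

lemma isCont_periodic:
  fixes u :: "real \<Rightarrow> real"
  assumes per: "\<forall>x. u (x + 1) = u x" and cont: "continuous_on {0..1} u"
  shows "isCont u t"
proof (rule isCont_of_continuous_on_cells[where g = real_of_int and k = "\<lfloor>t\<rfloor>"])
  fix k :: int
  have "continuous_on {of_int k..of_int (k + 1)} (\<lambda>x. u (x - of_int k))"
    by (rule continuous_on_compose2[OF cont]) (auto intro!: continuous_intros)
  then show "continuous_on {of_int k..of_int (k + 1)} u"
    using periodic_add_of_int[OF per, of _ "- k"] by simp
qed linarith+

lemma isCont_lin_interp:
  assumes per: "\<forall>x. u (x + 1) = u (x::real)" and m: "m > 0"
  shows "isCont (lin_interp m u) t"
proof (rule isCont_of_continuous_on_cells[where g = "\<lambda>k. of_int k / real m" and k = "\<lfloor>t * real m\<rfloor>"])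
  fix k :: int
  show "of_int k / real m < of_int (k + 1) / real m" using m by (simp add: divide_strict_right_mono)
  have "continuous_on {of_int k / real m..of_int (k + 1) / real m}
      (\<lambda>x. grid_val m u k + grid_slope m u k * (x - of_int k / real m))"
    by (intro continuous_intros)
  moreover have "grid_val m u k + grid_slope m u k * (x - of_int k / real m) = lin_interp m u x"
    if "x \<in> {of_int k / real m..of_int (k + 1) / real m}" for x
    using lin_interp_on_cell[OF per m, of k x] that m by (simp add: field_simps)
  ultimately show "continuous_on {of_int k / real m..of_int (k + 1) / real m} (lin_interp m u)"
    using continuous_on_eq by blast
next
  have "of_int \<lfloor>t * real m\<rfloor> \<le> t * real m" "t * real m < of_int \<lfloor>t * real m\<rfloor> + 1" by linarith+
  then show "of_int \<lfloor>t * real m\<rfloor> / real m \<le> t" "t < of_int (\<lfloor>t * real m\<rfloor> + 1) / real m"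
    using m by (simp_all add: divide_le_eq less_divide_eq)
qed

lemma bdd_above_modulus_set:
  assumes cont: "continuous_on {0..1} (u :: real \<Rightarrow> real)"
  shows "bdd_above {\<bar>u x - u y\<bar> | x y. x \<in> {0..1} \<and> y \<in> {0..1} \<and> \<bar>x - y\<bar> < r}"
proof -
  obtain B where B: "\<forall>z\<in>u ` {0..1}. \<bar>z\<bar> \<le> B"
    using compact_continuous_image[OF cont] compact_imp_bounded bounded_real by (metis compact_Icc)
  have "\<bar>u x - u y\<bar> \<le> 2 * B" if "x \<in> {0..1}" "y \<in> {0..1}" for x y
  proof -
    have "\<bar>u x\<bar> \<le> B" "\<bar>u y\<bar> \<le> B" using B that by auto
    then show ?thesis by linarith
  qed
  then show ?thesis by (auto intro!: bdd_aboveI[of _ "2 * B"])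
qed

lemma abs_diff_le_modulus:
  assumes cont: "continuous_on {0..1} (u :: real \<Rightarrow> real)"
    and "x \<in> {0..1}" "y \<in> {0..1}" "\<bar>x - y\<bar> < r"
  shows "\<bar>u x - u y\<bar> \<le> modulus u r"
  unfolding modulus_def by (rule cSup_upper[OF _ bdd_above_modulus_set[OF cont]]) (use assms in blast)

lemma modulus_nonneg:
  assumes cont: "continuous_on {0..1} (u :: real \<Rightarrow> real)" and "r > 0"
  shows "0 \<le> modulus u r"
  using abs_diff_le_modulus[OF cont, of 0 0 r] assms by simp

text \<open>The modulus is defined with a strict inequality; by continuity it also controls
  pairs at distance exactly r.\<close>
lemma abs_diff_le_modulus_closed:
  assumes cont: "continuous_on {0..1} (u :: real \<Rightarrow> real)"
    and x: "x \<in> {0..1}" and y: "y \<in> {0..1}" and xy: "\<bar>x - y\<bar> \<le> r" and r: "r > 0"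
  shows "\<bar>u x - u y\<bar> \<le> modulus u r"
proof -
  define w where "w k = inverse (real (Suc k))" for k
  define X where "X k = x + w k * (y - x)" for k
  have X: "X k \<in> {0..1}" "\<bar>u (X k) - u y\<bar> \<le> modulus u r" for k
  proof -
    have w: "0 < w k" "w k \<le> 1" unfolding w_def by (auto simp: inverse_le_1_iff)
    have "X k = (1 - w k) * x + w k * y" unfolding X_def by (simp add: algebra_simps)
    moreover have "(1 - w k) * x \<le> 1 - w k" "w k * y \<le> w k" "0 \<le> (1 - w k) * x" "0 \<le> w k * y"
      using x y w by (simp_all add: mult_left_le)
    ultimately show X01: "X k \<in> {0..1}" by simp
    have "X k - y = (1 - w k) * (x - y)" unfolding X_def by (simp add: algebra_simps)
    then have "\<bar>X k - y\<bar> = (1 - w k) * \<bar>x - y\<bar>" using w by (simp add: abs_mult)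
    also have "\<dots> \<le> (1 - w k) * r" using xy w by (simp add: mult_left_mono)
    also have "\<dots> < r" using w r by simp
    finally show "\<bar>u (X k) - u y\<bar> \<le> modulus u r" by (rule abs_diff_le_modulus[OF cont X01 y])
  qed
  have "X \<longlonglongrightarrow> x + 0 * (y - x)"
    unfolding X_def w_def by (intro tendsto_intros LIMSEQ_inverse_real_of_nat)
  then have "(\<lambda>k. u (X k)) \<longlonglongrightarrow> u x"
    by (intro continuous_on_tendsto_compose[OF cont _ x] always_eventually) (use X(1) in auto)
  then have "(\<lambda>k. \<bar>u (X k) - u y\<bar>) \<longlonglongrightarrow> \<bar>u x - u y\<bar>"
    by (intro tendsto_intros)
  then show ?thesis using X(2) by (meson LIMSEQ_le_const2)
qed

text \<open>The modulus only sees pairs inside [0,1]; for the periodic extension it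
  still applies to pairs that do not straddle an integer.\<close>
lemma abs_diff_le_modulus_periodic:
  assumes cont: "continuous_on {0..1} (u :: real \<Rightarrow> real)" and per: "\<forall>x. u (x + 1) = u x"
    and ab: "a \<le> b" "b - a \<le> r" and r: "r > 0"
    and no_int: "\<not> (\<exists>n::int. a < of_int n \<and> of_int n < b)"
  shows "\<bar>u a - u b\<bar> \<le> modulus u r"
proof -
  define n where "n = \<lfloor>a\<rfloor>"
  have "a < of_int (n + 1)" unfolding n_def by linarith
  then have "b \<le> of_int n + 1" using no_int by (metis not_le of_int_add of_int_1)
  moreover have "of_int n \<le> a" unfolding n_def by simp
  ultimately have "\<bar>u (a - of_int n) - u (b - of_int n)\<bar> \<le> modulus u r"
    using ab r by (intro abs_diff_le_modulus_closed[OF cont]) auto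
  then show ?thesis using periodic_add_of_int[OF per, of _ "- n"] by simp
qed

lemma abs_diff_le_modulus_same_cell:
  assumes cont: "continuous_on {0..1} (u :: real \<Rightarrow> real)" and per: "\<forall>x. u (x + 1) = u x"
    and m: "m > 0" and cell: "of_int k \<le> a * real m" "a * real m \<le> of_int k + 1"
      "of_int k \<le> b * real m" "b * real m \<le> of_int k + 1"
  shows "\<bar>u a - u b\<bar> \<le> modulus u (1 / real m)"
proof -
  have "\<bar>a * real m - b * real m\<bar> \<le> 1" using cell by linarith
  then have "\<bar>a - b\<bar> * real m \<le> 1" by (simp add: abs_mult flip: left_diff_distrib)
  then have ab: "\<bar>a - b\<bar> \<le> 1 / real m" using m by (simp add: field_simps)
  have r: "1 / real m > 0" using m by simp
  have no_int: "\<not> (\<exists>n::int. x < of_int n \<and> of_int n < x')"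
    if "of_int k \<le> x * real m" "x' * real m \<le> of_int k + 1" for x x'
  proof
    assume "\<exists>n::int. x < of_int n \<and> of_int n < x'"
    then obtain n :: int where "x < of_int n" "of_int n < x'" by blast
    then have "x * real m < of_int n * real m" "of_int n * real m < x' * real m"
      using m by simp_all
    then have "real_of_int k < real_of_int (n * int m)" "real_of_int (n * int m) < real_of_int (k + 1)"
      using that by simp_all
    then show False by (simp only: of_int_less_iff)
  qed
  show ?thesis
  proof (cases "a \<le> b")
    case True
    then show ?thesis using abs_diff_le_modulus_periodic[OF cont per True _ r no_int] cell ab by simp
  next
    case False
    then have "\<bar>u b - u a\<bar> \<le> modulus u (1 / real m)"
      using abs_diff_le_modulus_periodic[OF cont per _ _ r no_int] cell ab by simp
    then show ?thesis by (simp add: abs_minus_commute)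
  qed
qed

lemma tendsto_modulus_at_right_0:
  assumes cont: "continuous_on {0..1} (u :: real \<Rightarrow> real)"
  shows "(modulus u \<longlongrightarrow> 0) (at_right 0)"
proof (rule tendstoI)
  fix e :: real assume e: "e > 0"
  obtain d where d: "d > 0" "\<forall>x\<in>{0..1}. \<forall>y\<in>{0..1}. dist y x < d \<longrightarrow> dist (u y) (u x) < e / 2"
    using compact_uniformly_continuous[OF cont compact_Icc] e
    unfolding uniformly_continuous_on_def by (metis half_gt_zero)
  have "dist (modulus u r) 0 < e" if r: "0 < r" "r < d" for r
  proof -
    have "modulus u r \<le> e / 2" unfolding modulus_def
    proof (rule cSup_least)
      show "{\<bar>u x - u y\<bar> | x y. x \<in> {0..1} \<and> y \<in> {0..1} \<and> \<bar>x - y\<bar> < r} \<noteq> {}"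
        using r by (auto intro!: exI[of _ 0])
    qed (use d r in \<open>fastforce simp: dist_real_def\<close>)
    then show ?thesis using modulus_nonneg[OF cont r(1)] e by simp
  qed
  then show "eventually (\<lambda>r. dist (modulus u r) 0 < e) (at_right 0)"
    using eventually_at_right_real[OF d(1)] by (auto elim: eventually_mono)
qed

lemma abs_lin_interp_diff_le:
  assumes per: "\<forall>x. u (x + 1) = u (x::real)" and m: "m > 0"
    and bounds: "\<bar>grid_val m u \<lfloor>z * real m\<rfloor> - v\<bar> \<le> M" "\<bar>grid_val m u (\<lfloor>z * real m\<rfloor> + 1) - v\<bar> \<le> M"
  shows "\<bar>lin_interp m u z - v\<bar> \<le> M"
proof -
  define i where "i = \<lfloor>z * real m\<rfloor>"
  define lam where "lam = z * real m - of_int i"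
  have lam: "0 \<le> lam" "lam \<le> 1" unfolding lam_def i_def by linarith+
  have "grid_slope m u i * (z - of_int i / real m) = (grid_val m u (i + 1) - grid_val m u i) * lam"
    unfolding grid_slope_def lam_def using m by (simp add: field_simps)
  then have "lin_interp m u z - v = (1 - lam) * (grid_val m u i - v) + lam * (grid_val m u (i + 1) - v)"
    using lin_interp_floor[OF per m, of z] unfolding i_def[symmetric] by (simp add: algebra_simps)
  also have "\<bar>\<dots>\<bar> \<le> (1 - lam) * M + lam * M"
    using bounds lam unfolding i_def[symmetric]
    by (intro order_trans[OF abs_triangle_ineq] add_mono) (simp_all add: abs_mult mult_left_mono)
  finally show ?thesis by (simp add: algebra_simps)
qed

lemma abs_diff_le_modulus_below_int:
  assumes cont: "continuous_on {0..1} (u :: real \<Rightarrow> real)" and per: "\<forall>x. u (x + 1) = u x"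
    and a: "a \<le> of_int n" "of_int n - a \<le> r" and r: "0 < r" "r < 1"
  shows "\<bar>u a - u (of_int n)\<bar> \<le> modulus u r"
proof (rule abs_diff_le_modulus_periodic[OF cont per a r(1)])
  show "\<not> (\<exists>n'::int. a < of_int n' \<and> of_int n' < real_of_int n)"
  proof
    assume "\<exists>n'::int. a < of_int n' \<and> of_int n' < real_of_int n"
    then obtain n' :: int where "a < of_int n'" "n' < n" by auto
    then have "real_of_int n' \<le> real_of_int (n - 1)" by (simp only: of_int_le_iff)
    then show False using \<open>a < of_int n'\<close> a r by simp
  qed
qed

lemma lin_interp_shift_error:
  assumes cont: "continuous_on {0..1} (u :: real \<Rightarrow> real)" and per: "\<forall>x. u (x + 1) = u x"
    and m: "m > 0" and d: "0 < d" "d < 1 / real m"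
  shows "\<bar>lin_interp m u (y + d) - u y\<bar> \<le> modulus u (1 / real m) + modulus u d"
proof -
  define z where "z = y + d"
  define i where "i = \<lfloor>z * real m\<rfloor>"
  have dm: "0 < d * real m" "d * real m < 1" using d m by (simp_all add: field_simps)
  have z: "of_int i \<le> z * real m" "z * real m < of_int i + 1" unfolding i_def by linarith+
  have y: "of_int i - 1 < y * real m" using z dm unfolding z_def by (simp add: algebra_simps)
  have node: "of_int j / real m * real m = of_int j" for j using m by simp
  have nonneg: "0 \<le> modulus u (1 / real m)" "0 \<le> modulus u d"
    using modulus_nonneg[OF cont] m d by simp_all
  have grid_step: "\<bar>grid_val m u (i + 1) - grid_val m u i\<bar> \<le> modulus u (1 / real m)"
    unfolding grid_val_def by (rule abs_diff_le_modulus_same_cell[OF cont per m, where k = i]) (use m in \<open>simp_all add: node\<close>)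
  show ?thesis
  proof (cases "\<exists>n::int. y < of_int n \<and> of_int n < z")
    case True
    then obtain n :: int where n: "y < of_int n" "of_int n < z" by blast
    \<comment> \<open>the integer n is the node i/m, so u y is compared with u n rather than with u z\<close>
    then have "y * real m < of_int n * real m" "of_int n * real m < z * real m" using m by simp_all
    then have "real_of_int (i - 1) < real_of_int (n * int m)" "real_of_int (n * int m) < real_of_int (i + 1)"
      using y z by simp_all
    then have "n * int m = i" by (simp only: of_int_less_iff)
    then have "of_int n * real m = of_int i" by (metis of_int_mult of_int_of_nat_eq)
    then have n_node: "of_int n = of_int i / real m" using m by (simp add: field_simps)
    have "1 / real m \<le> 1" using m by simp
    then have "\<bar>u y - u (of_int n)\<bar> \<le> modulus u d"
      using n d by (intro abs_diff_le_modulus_below_int[OF cont per]) (simp_all add: z_def)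
    then have "\<bar>grid_val m u i - u y\<bar> \<le> modulus u d"
      by (simp add: grid_val_def n_node abs_minus_commute)
    then show ?thesis
      using grid_step nonneg
      by (intro abs_lin_interp_diff_le[OF per m]) (simp_all add: z_def[symmetric] i_def[symmetric])
  next
    case False
    have "\<bar>u y - u z\<bar> \<le> modulus u d"
      using abs_diff_le_modulus_periodic[OF cont per, of y z d] False d by (simp add: z_def)
    moreover have "\<bar>grid_val m u j - u z\<bar> \<le> modulus u (1 / real m)" if "j = i \<or> j = i + 1" for j
      unfolding grid_val_def
      by (rule abs_diff_le_modulus_same_cell[OF cont per m, where k = i]) (use z m that in \<open>auto simp: node\<close>)
    then have "\<bar>lin_interp m u z - u z\<bar> \<le> modulus u (1 / real m)"
      by (intro abs_lin_interp_diff_le[OF per m]) (simp_all add: i_def)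
    ultimately show ?thesis unfolding z_def[symmetric] by linarith
  qed
qed

lemma jet_interp_jet_init:
  assumes per: "\<forall>x. u (x + 1) = u (x::real)" and m: "m > 0" and d: "0 < d" "d < 1 / real m"
  shows "jet_interp m (jet_init m u d) x = lin_interp m u (x + d)"
  using jet_interp_samples[OF per m jet_init_samples[OF per m d]] .

lemma jet_interp_jet_iter:
  assumes per: "\<forall>x. u (x + 1) = u (x::real)" and m: "m > 0" and d: "0 < d" "d < 1 / real m"
  shows "jet_interp m (jet_iter m \<mu> (jet_init m u d) n) x = lin_interp m u (x + (d - real n * \<mu> / real m))"
  using jet_interp_samples[OF per m jet_iter_samples[OF per m jet_init_samples[OF per m d]]] .

lemma jet_err_fun_eq:
  assumes per: "\<forall>x. u (x + 1) = u (x::real)" and a: "a \<noteq> 0" and m: "m > 0" and d: "0 < d" "d < 1 / real m"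
  shows "jet_err_fun a m \<mu> u d n =
    (\<lambda>x. \<bar>lin_interp m u ((x - real n * \<mu> / real m) + d) - u (x - real n * \<mu> / real m)\<bar>)"
proof
  fix x
  have "a * (real n * (\<mu> * (1 / real m) / a)) = real n * \<mu> / real m" using a by simp
  moreover have "x + (d - real n * \<mu> / real m) = (x - real n * \<mu> / real m) + d" by simp
  ultimately show "jet_err_fun a m \<mu> u d n x = \<bar>lin_interp m u ((x - real n * \<mu> / real m) + d) - u (x - real n * \<mu> / real m)\<bar>"
    unfolding jet_err_fun_def jet_interp_jet_iter[OF per m d] periodic_frac[OF per] by (simp only:)
qed

lemma jet_err_fun_integrable:
  assumes cont: "continuous_on {0..1} (u :: real \<Rightarrow> real)" and per: "\<forall>x. u (x + 1) = u x"
    and a: "a \<noteq> 0" and m: "m > 0" and d: "0 < d" "d < 1 / real m"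
  shows "jet_err_fun a m \<mu> u d n integrable_on {0..1}"
proof -
  have I: "continuous_on UNIV (lin_interp m u)" and U: "continuous_on UNIV u"
    using isCont_lin_interp[OF per m] isCont_periodic[OF per cont]
    by (simp_all add: continuous_at_imp_continuous_on)
  have "continuous_on {0..1} (\<lambda>x. lin_interp m u ((x - real n * \<mu> / real m) + d))"
    by (rule continuous_on_compose2[OF I]) (auto intro!: continuous_intros)
  moreover have "continuous_on {0..1} (\<lambda>x. u (x - real n * \<mu> / real m))"
    by (rule continuous_on_compose2[OF U]) (auto intro!: continuous_intros)
  ultimately
  have "continuous_on {0..1} (jet_err_fun a m \<mu> u d n)"
    unfolding jet_err_fun_eq[OF per a m d] by (intro continuous_intros)
  then show ?thesis by (rule integrable_continuous_real)
qed

lemma jet_error_bounds: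
  assumes cont: "continuous_on {0..1} (u :: real \<Rightarrow> real)" and per: "\<forall>x. u (x + 1) = u x"
    and a: "a \<noteq> 0" and m: "m > 0" and d: "0 < d" "d < 1 / real m"
  shows "0 \<le> jet_error a m \<mu> u d n" "jet_error a m \<mu> u d n \<le> modulus u (1 / real m) + modulus u d"
proof -
  note int = jet_err_fun_integrable[OF cont per a m d]
  show "0 \<le> jet_error a m \<mu> u d n"
    unfolding jet_error_def by (rule integral_nonneg[OF int]) (simp add: jet_err_fun_def)
  have "jet_error a m \<mu> u d n \<le> integral {0..1} (\<lambda>x::real. modulus u (1 / real m) + modulus u d)"
    unfolding jet_error_def
    by (rule integral_le[OF int integrable_const_ivl])
      (simp add: jet_err_fun_eq[OF per a m d] lin_interp_shift_error[OF cont per m d])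
  then show "jet_error a m \<mu> u d n \<le> modulus u (1 / real m) + modulus u d" by simp
qed

lemma commuting_limits_of_uniform_bound:
  fixes E :: "'a \<Rightarrow> nat \<Rightarrow> real" and B :: "'a \<Rightarrow> real"
  assumes F: "F \<noteq> bot" and bound: "eventually (\<lambda>m. \<forall>n. 0 \<le> E m n \<and> E m n \<le> B m) F"
    and B: "(B \<longlongrightarrow> 0) F"
  shows "((\<lambda>m. limsup (\<lambda>n. ereal (E m n))) \<longlongrightarrow> ereal 0) F"
    and "\<forall>n. ((\<lambda>m. E m n) \<longlongrightarrow> 0) F"
    and "limsup (\<lambda>n. ereal (Lim F (\<lambda>m. E m n))) = 0"
proof -
  show "((\<lambda>m. limsup (\<lambda>n. ereal (E m n))) \<longlongrightarrow> ereal 0) F"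
  proof (rule tendsto_sandwich[OF _ _ tendsto_const tendsto_ereal[OF B]])
    show "eventually (\<lambda>m. ereal 0 \<le> limsup (\<lambda>n. ereal (E m n))) F"
      using bound by eventually_elim (auto intro: le_Limsup)
    show "eventually (\<lambda>m. limsup (\<lambda>n. ereal (E m n)) \<le> ereal (B m)) F"
      using bound by eventually_elim (auto intro: Limsup_bounded)
  qed
  have lim: "((\<lambda>m. E m n) \<longlongrightarrow> 0) F" for n
    by (rule tendsto_sandwich[OF _ _ tendsto_const B]) (use bound in \<open>auto elim: eventually_mono\<close>)
  then show "\<forall>n. ((\<lambda>m. E m n) \<longlongrightarrow> 0) F" ..
  have "Lim F (\<lambda>m. E m n) = 0" for n by (rule tendsto_Lim[OF F lim])
  then show "limsup (\<lambda>n. ereal (Lim F (\<lambda>m. E m n))) = 0"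
    using Limsup_const[of sequentially "ereal 0"] by (simp add: zero_ereal_def)
qed

lemma modulus_grid_tendsto_0:
  assumes cont: "continuous_on {0..1} (u :: real \<Rightarrow> real)" and F: "F \<le> sequentially"
    and \<delta>: "eventually (\<lambda>m. 0 < \<delta> m \<and> \<delta> m < 1 / real m) F"
  shows "((\<lambda>m. modulus u (1 / real m) + modulus u (\<delta> m)) \<longlongrightarrow> 0) F"
proof -
  have "filterlim (\<lambda>m. inverse (real m)) (at_right 0) sequentially"
    by (rule filterlim_compose[OF filterlim_inverse_at_right_top filterlim_real_sequentially])
  then have h: "filterlim (\<lambda>m. 1 / real m) (at_right 0) F"
    using filterlim_mono[OF _ order_refl F] by (simp add: inverse_eq_divide)
  have "(\<delta> \<longlongrightarrow> 0) F"
    by (rule tendsto_sandwich[OF _ _ tendsto_const conjunct2[OF h[unfolded filterlim_at]]])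
      (use \<delta> in \<open>auto elim: eventually_mono\<close>)
  with \<delta> have "filterlim \<delta> (at_right 0) F"
    by (auto intro: tendsto_imp_filterlim_at_right elim: eventually_mono)
  with h show ?thesis
    using filterlim_compose[OF tendsto_modulus_at_right_0[OF cont]] tendsto_add_zero by metis
qed

lemma jet_scheme_on_grid:
  assumes cont: "continuous_on {0..1} (u :: real \<Rightarrow> real)" and per: "\<forall>x. u (x + 1) = u x"
    and a: "a \<noteq> 0" and m: "m > 0" and d: "0 < d" "d < 1 / real m"
  shows "(\<forall>x. jet_interp m (jet_init m u d) x = lin_interp m u (x + d)) \<and>
    (\<forall>n x. jet_interp m (jet_iter m \<mu> (jet_init m u d) n) x
          = jet_interp m (jet_init m u d) (frac (x - real n * \<mu> * (1 / real m)))) \<and>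
    (\<forall>n. jet_err_fun a m \<mu> u d n integrable_on {0..1}) \<and>
    (\<forall>n. jet_error a m \<mu> u d n \<le> modulus u (1 / real m) + modulus u d)"
proof -
  have shift: "x + (d - real n * \<mu> / real m) = x - real n * \<mu> / real m + d" for n x
    by simp
  show ?thesis
    using jet_err_fun_integrable[OF cont per a m d] jet_error_bounds[OF cont per a m d]
    by (simp add: jet_interp_jet_init[OF per m d] jet_interp_jet_iter[OF per m d] lin_interp_frac_add shift)
qed

lemma inf_sequentially_principal_ne_bot:
  assumes "infinite (S :: nat set)"
  shows "inf sequentially (principal S) \<noteq> bot"
proof
  assume "inf sequentially (principal S) = bot"
  then have "eventually (\<lambda>m. False) (inf sequentially (principal S))" by simp
  then have "eventually (\<lambda>m. m \<notin> S) sequentially" by (simp add: eventually_inf_principal)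
  then obtain N where "\<forall>m\<ge>N. m \<notin> S" unfolding eventually_sequentially by blast
  then have "S \<subseteq> {..<N}" by (auto simp: not_le[symmetric])
  then show False using assms finite_subset by blast
qed

lemma infinite_grid_sizes:
  assumes "0 < real p / real q"
  shows "infinite {m::nat. 0 < m \<and> (\<exists>N::nat. real N = 1 / (real p / real q * (1 / real m)))}"
    (is "infinite ?S")
proof -
  have p: "p > 0" using assms by (auto intro: gr0I)
  have "p * Suc k \<in> ?S" for k
  proof -
    have "1 / (real p / real q * (1 / real (p * Suc k))) = real (q * Suc k)"
      using p by (simp add: field_simps)
    then show ?thesis using p by (metis (mono_tags) mem_Collect_eq mult_pos_pos zero_less_Suc)
  qed
  moreover have "m \<le> p * Suc m" for m using mult_le_mono1[of 1 p "Suc m"] p by simp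
  ultimately show ?thesis unfolding infinite_nat_iff_unbounded_le by blast
qed

theorem mainTheorem4:
  fixes a :: real and p q :: nat and u0 :: "real \<Rightarrow> real" and \<delta> :: "nat \<Rightarrow> real"
  defines "\<mu> \<equiv> real p / real q"
  defines "S \<equiv> {m::nat. 0 < m \<and> (\<exists>N::nat. real N = 1 / (\<mu> * (1 / real m)))}"
  assumes "a > 0" and "coprime p q" and "0 < \<mu>" and "\<mu> < 1"
    and "continuous_on {0..1} u0" and "\<forall>x. u0 (x + 1) = u0 x"
    and "\<forall>m\<in>S. 0 < \<delta> m \<and> \<delta> m < (1 / real m) / real q"
  shows "(\<forall>m\<in>S.
           (\<forall>x. jet_interp m (jet_init m u0 (\<delta> m)) x = lin_interp m u0 (x + \<delta> m)) \<and>
           (\<forall>n x. jet_interp m (jet_iter m \<mu> (jet_init m u0 (\<delta> m)) n) x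
                 = jet_interp m (jet_init m u0 (\<delta> m)) (frac (x - real n * \<mu> * (1 / real m)))) \<and>
           (\<forall>n. jet_err_fun a m \<mu> u0 (\<delta> m) n integrable_on {0..1}) \<and>
           (\<forall>n. jet_error a m \<mu> u0 (\<delta> m) n \<le> modulus u0 (1 / real m) + modulus u0 (\<delta> m)))
       \<and> ((\<lambda>m. limsup (\<lambda>n. ereal (jet_error a m \<mu> u0 (\<delta> m) n))) \<longlongrightarrow> ereal 0)
           (inf sequentially (principal S))
       \<and> (\<forall>n. ((\<lambda>m. jet_error a m \<mu> u0 (\<delta> m) n) \<longlongrightarrow> 0) (inf sequentially (principal S)))
       \<and> limsup (\<lambda>n. ereal (Lim (inf sequentially (principal S)) (\<lambda>m. jet_error a m \<mu> u0 (\<delta> m) n))) = 0"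
proof -
  have per: "\<forall>x. u0 (x + 1) = u0 x" and cont: "continuous_on {0..1} u0" by fact+
  have a: "a \<noteq> 0" using \<open>a > 0\<close> by simp
  have q: "q > 0" using \<open>0 < \<mu>\<close> unfolding \<mu>_def by (auto intro: gr0I)
  have grid: "0 < m \<and> 0 < \<delta> m \<and> \<delta> m < 1 / real m" if "m \<in> S" for m
  proof -
    have m: "0 < m" using that unfolding S_def by simp
    have "1 / real m / real q \<le> 1 / real m" using q m by (simp add: frac_le)
    then show ?thesis using that m \<open>\<forall>m\<in>S. 0 < \<delta> m \<and> \<delta> m < 1 / real m / real q\<close> by fastforce
  qed
  define F where "F = inf sequentially (principal S)"
  have "infinite S" unfolding S_def \<mu>_def by (rule infinite_grid_sizes) (use \<open>0 < \<mu>\<close> \<mu>_def in simp)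
  then have "F \<noteq> bot" unfolding F_def by (rule inf_sequentially_principal_ne_bot)
  have in_S: "eventually (\<lambda>m. m \<in> S) F" unfolding F_def eventually_inf_principal by simp
  have bound: "eventually (\<lambda>m. \<forall>n. 0 \<le> jet_error a m \<mu> u0 (\<delta> m) n \<and>
      jet_error a m \<mu> u0 (\<delta> m) n \<le> modulus u0 (1 / real m) + modulus u0 (\<delta> m)) F"
    using in_S by (rule eventually_mono) (use jet_error_bounds[OF cont per a] grid in metis)
  have "((\<lambda>m. modulus u0 (1 / real m) + modulus u0 (\<delta> m)) \<longlongrightarrow> 0) F"
    using in_S grid unfolding F_def by (intro modulus_grid_tendsto_0[OF cont]) (auto elim: eventually_mono)
  note limits = commuting_limits_of_uniform_bound[OF \<open>F \<noteq> bot\<close> bound this, unfolded F_def]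
  show ?thesis
    using limits grid jet_scheme_on_grid[OF cont per a] by (intro conjI ballI) metis+
qed

end
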